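(* Let $n=rk$, let $f:\mathbb{F}_{2^n}\to\mathbb{F}_{2^k}$, let $L:\mathbb{F}_{2^n}\to\mathbb{F}_{2^n}$ be an $\mathbb{F}_{2^k}$-linear permutation of $\mathbb{F}_{2^n}$, and let $g:\mathbb{F}_{2^k}\to\mathbb{F}_{2^k}$ be a permutation. Let $i\in\{0,\dots,k-1\}$, $\gamma\in\mathbb{F}_{2^n}^*$ and $a\in\mathbb{F}_{2^k}^*$ be such that $f(x+u\gamma)+f(x)=u^{2^i}a$ for all $x\in\mathbb{F}_{2^n}$ and all $u\in\mathbb{F}_{2^k}$. Then $$\phi(x)=L(x)+L(\gamma)\left(g(f(x))+\frac{f(x)}{a}\right)^{2^{n-i}}$$ is a permutation of $\mathbb{F}_{2^n}$, and its inverse is $$\phi^{-1}(x)=L^{-1}(x)+\gamma\, a^{-2^{n-i}}\left(g^{-1}\!\left(\frac{f(L^{-1}(x))}{a}\right)+f(L^{-1}(x))\right)^{2^{n-i}}.$$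
   Context: An $\mathbb{F}_{2^k}$-linear function on $\mathbb{F}_{2^n}$ is one of the form $L(x)=\sum_{j=0}^{r-1}\lambda_j x^{2^{kj}}$ with $\lambda_j\in\mathbb{F}_{2^n}$; $L^{-1}$ and $g^{-1}$ denote compositional inverses. *)

theory Defs
  imports Main
begin

text \<open>The subfield F_{2^k} of a finite field of order 2^n (k dividing n) is the set
  of fixed points of the Frobenius power x \<mapsto> x^(2^k).\<close>
definition subfield_pow2 :: "nat \<Rightarrow> 'a::field set" where
  "subfield_pow2 k = {x. x ^ (2 ^ k) = x}"

definition Fq_linear :: "nat \<Rightarrow> nat \<Rightarrow> ('a::field \<Rightarrow> 'a) \<Rightarrow> bool" where
  "Fq_linear k r L \<longleftrightarrow> (\<exists>lam :: nat \<Rightarrow> 'a. \<forall>x. L x = (\<Sum>j<r. lam j * x ^ (2 ^ (k * j))))"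

end

theory Submission
  imports Defs
begin

text \<open>Write \<open>s x = g (f x) + f x / a\<close> and \<open>T x = s x ^ 2^(n-i)\<close>, so that \<open>T x ^ 2^i = s x\<close>.
  Since \<open>T x\<close> lies in the subfield, \<open>L\<close> is linear along \<open>\<gamma>\<close> and \<open>\<phi> = L \<circ> \<psi>\<close> with
  \<open>\<psi> x = x + T x \<gamma>\<close>. The derivative hypothesis gives \<open>f (\<psi> x) = f x + s x a = a g (f x)\<close>,
  so \<open>f (\<psi> x)\<close> determines \<open>f x\<close> and hence \<open>T x\<close>; subtracting \<open>T x \<gamma>\<close> recovers \<open>x\<close>.
  Thus \<open>\<psi>\<close> has a left inverse, is a permutation of the finite field, and
  \<open>\<phi>\<^sup>-\<^sup>1 = \<psi>\<^sup>-\<^sup>1 \<circ> L\<^sup>-\<^sup>1\<close>.\<close>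

lemma char_2_if_card_UNIV_pow2:
  assumes "card (UNIV :: 'a::{field,finite} set) = 2 ^ n"
  shows "(2::'a) = 0"
proof -
  have "(\<Sum>y\<in>(UNIV::'a set). 1 + y) = (\<Sum>y\<in>UNIV. y)"
    by (rule sum.reindex_bij_witness[of _ "\<lambda>y. y - 1" "\<lambda>y. 1 + y"]) auto
  then have "of_nat (card (UNIV::'a set)) = (0::'a)"
    by (simp add: sum.distrib)
  then show ?thesis
    using assms by simp
qed

lemma power_card_UNIV_field:
  fixes x :: "'a::{field,finite}"
  shows "x ^ card (UNIV :: 'a set) = x"
proof (cases "x = 0")
  case True
  then show ?thesis
    by (simp add: finite_UNIV_card_ge_0)
next
  case False
  define S where "S = (UNIV :: 'a set) - {0}"
  have "bij_betw ((*) x) S S"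
    by (rule bij_betw_byWitness[of _ "\<lambda>y. y / x"]) (auto simp: S_def False)
  then have "(\<Prod>y\<in>S. x * y) = (\<Prod>y\<in>S. y)"
    using prod.reindex_bij_betw[of "(*) x" S S "\<lambda>y. y"] by simp
  moreover have "(\<Prod>y\<in>S. x * y) = x ^ card S * (\<Prod>y\<in>S. y)"
    by (simp add: prod.distrib)
  moreover have "(\<Prod>y\<in>S. y) \<noteq> 0"
    by (simp add: S_def)
  ultimately have "x ^ card S = 1"
    by simp
  moreover have "card (UNIV :: 'a set) = Suc (card S)"
    using finite_UNIV_card_ge_0[where 'a='a] by (simp add: S_def card_Diff_singleton)
  ultimately show ?thesis
    by simp
qed

lemma add_self_char_2:
  fixes x :: "'a::ring_1"
  assumes "(2::'a) = 0"
  shows "x + x = 0"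
  by (metis assms mult_2 mult_zero_left)

lemma frobenius_pow2_add:
  fixes x y :: "'a::comm_ring_1"
  assumes "(2::'a) = 0"
  shows "(x + y) ^ 2 ^ m = x ^ 2 ^ m + y ^ 2 ^ m"
proof (induction m)
  case 0
  then show ?case by simp
next
  case (Suc m)
  have square_add: "(u + v) ^ 2 = u ^ 2 + v ^ 2" for u v :: 'a
    using assms by (simp add: power2_sum)
  have "(x + y) ^ 2 ^ Suc m = ((x + y) ^ 2 ^ m) ^ 2"
    by (simp add: power_mult[symmetric] mult.commute)
  also have "\<dots> = (x ^ 2 ^ m) ^ 2 + (y ^ 2 ^ m) ^ 2"
    using Suc square_add by simp
  also have "\<dots> = x ^ 2 ^ Suc m + y ^ 2 ^ Suc m"
    by (simp add: power_mult[symmetric] mult.commute)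
  finally show ?case .
qed

lemma power_pow2_cancel:
  fixes s :: "'a::monoid_mult"
  assumes "s ^ 2 ^ n = s" and "i \<le> n"
  shows "(s ^ 2 ^ (n - i)) ^ 2 ^ i = s"
  using assms by (simp add: power_mult[symmetric] power_add[symmetric])

lemma subfield_pow2_add:
  fixes s t :: "'a::field"
  assumes "(2::'a) = 0" and "s \<in> subfield_pow2 k" and "t \<in> subfield_pow2 k"
  shows "s + t \<in> subfield_pow2 k"
  using assms frobenius_pow2_add[OF assms(1)] by (simp add: subfield_pow2_def)

lemma subfield_pow2_divide:
  fixes s t :: "'a::field"
  assumes "s \<in> subfield_pow2 k" and "t \<in> subfield_pow2 k"
  shows "s / t \<in> subfield_pow2 k"
  using assms by (simp add: subfield_pow2_def power_divide)

lemma subfield_pow2_power: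
  fixes t :: "'a::field"
  assumes "t \<in> subfield_pow2 k"
  shows "t ^ m \<in> subfield_pow2 k"
proof -
  have "(t ^ m) ^ 2 ^ k = (t ^ 2 ^ k) ^ m"
    by (metis power_mult mult.commute)
  then show ?thesis
    using assms by (simp add: subfield_pow2_def)
qed

lemma subfield_pow2_power_iter:
  fixes t :: "'a::field"
  assumes "t \<in> subfield_pow2 k"
  shows "t ^ 2 ^ (k * j) = t"
proof (induction j)
  case 0
  then show ?case by simp
next
  case (Suc j)
  have "t ^ 2 ^ (k * Suc j) = (t ^ 2 ^ (k * j)) ^ 2 ^ k"
    by (simp add: power_mult[symmetric] power_add mult.commute)
  then show ?case
    using Suc assms by (simp add: subfield_pow2_def)
qed

lemma Fq_linear_add_scale:
  fixes L :: "'a::field \<Rightarrow> 'a"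
  assumes "(2::'a) = 0" and "Fq_linear k r L" and "t \<in> subfield_pow2 k"
  shows "L (x + t * y) = L x + t * L y"
proof -
  obtain lam :: "nat \<Rightarrow> 'a" where lam: "\<And>x. L x = (\<Sum>j<r. lam j * x ^ 2 ^ (k * j))"
    using assms(2) unfolding Fq_linear_def by blast
  have "(x + t * y) ^ 2 ^ (k * j) = x ^ 2 ^ (k * j) + t * y ^ 2 ^ (k * j)" for j
    using subfield_pow2_power_iter[OF assms(3)]
    by (simp add: frobenius_pow2_add[OF assms(1)] power_mult_distrib)
  then have "L (x + t * y) = (\<Sum>j<r. lam j * x ^ 2 ^ (k * j) + t * (lam j * y ^ 2 ^ (k * j)))"
    unfolding lam by (simp add: algebra_simps)
  also have "\<dots> = L x + t * L y"
    unfolding lam by (simp add: sum.distrib sum_distrib_left)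
  finally show ?thesis .
qed

lemma bij_inv_eq_if_left_inverse:
  fixes \<psi> :: "'a::finite \<Rightarrow> 'a"
  assumes "\<And>x. G (\<psi> x) = x"
  shows "bij \<psi> \<and> inv \<psi> = G"
proof -
  have "inj \<psi>"
    by (metis assms injI)
  then have "bij \<psi>"
    by (simp add: bij_def finite_UNIV_inj_surj)
  moreover have "inv \<psi> = G"
  proof
    fix y
    obtain x where "y = \<psi> x"
      using \<open>bij \<psi>\<close> by (metis bij_pointE)
    then show "inv \<psi> y = G y"
      using \<open>inj \<psi>\<close> assms by simp
  qed
  ultimately show ?thesis ..
qed

locale switching =
  fixes f g :: "'a::{field,finite} \<Rightarrow> 'a" and \<gamma> a :: 'a and n k i :: nat
  assumes char_2: "(2::'a) = 0"
    and frobenius_id: "\<And>x::'a. x ^ 2 ^ n = x"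
    and i_le: "i \<le> n"
    and f_range: "\<And>x. f x \<in> subfield_pow2 k"
    and g_perm: "bij_betw g (subfield_pow2 k) (subfield_pow2 k)"
    and a_in: "a \<in> subfield_pow2 k" and a_nz: "a \<noteq> 0"
    and deriv: "\<And>x u. u \<in> subfield_pow2 k \<Longrightarrow> f (x + u * \<gamma>) + f x = u ^ 2 ^ i * a"
begin

definition switch_coeff :: "'a \<Rightarrow> 'a" where
  "switch_coeff x = (g (f x) + f x / a) ^ 2 ^ (n - i)"

definition switch_map :: "'a \<Rightarrow> 'a" where
  "switch_map x = x + switch_coeff x * \<gamma>"

definition switch_inverse :: "'a \<Rightarrow> 'a" where
  "switch_inverse y = y + \<gamma> * inverse (a ^ 2 ^ (n - i))
     * (inv_into (subfield_pow2 k) g (f y / a) + f y) ^ 2 ^ (n - i)"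

lemma switch_coeff_in_subfield: "switch_coeff x \<in> subfield_pow2 k"
  unfolding switch_coeff_def
  using f_range g_perm a_in
  by (intro subfield_pow2_power subfield_pow2_add[OF char_2] subfield_pow2_divide)
    (auto dest: bij_betwE)

lemma f_switch_map: "f (switch_map x) = a * g (f x)"
proof -
  have "switch_coeff x ^ 2 ^ i = g (f x) + f x / a"
    unfolding switch_coeff_def using power_pow2_cancel frobenius_id i_le by blast
  then have "f (switch_map x) + f x = (g (f x) + f x / a) * a"
    unfolding switch_map_def using deriv[OF switch_coeff_in_subfield] by simp
  also have "\<dots> = a * g (f x) + f x"
    using a_nz by (simp add: algebra_simps)
  finally show ?thesis
    using add_self_char_2[OF char_2] by (metis add_right_imp_eq)
qed

lemma switch_inverse_switch_map: "switch_inverse (switch_map x) = x"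
proof -
  have "inv_into (subfield_pow2 k) g (f (switch_map x) / a) = f x"
    using f_switch_map a_nz bij_betw_imp_inj_on[OF g_perm] f_range by simp
  then have "inv_into (subfield_pow2 k) g (f (switch_map x) / a) + f (switch_map x)
      = a * (g (f x) + f x / a)"
    using f_switch_map a_nz by (simp add: algebra_simps)
  then have "switch_inverse (switch_map x) = switch_map x + switch_coeff x * \<gamma>"
    using a_nz by (simp add: switch_inverse_def switch_coeff_def power_mult_distrib)
  also have "\<dots> = x + (switch_coeff x * \<gamma> + switch_coeff x * \<gamma>)"
    by (simp add: switch_map_def algebra_simps)
  finally show ?thesis
    by (simp add: add_self_char_2[OF char_2])
qed

lemma bij_switch_map: "bij switch_map"
  and inv_switch_map: "inv switch_map = switch_inverse"
  using bij_inv_eq_if_left_inverse[of switch_inverse switch_map] switch_inverse_switch_map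
  by auto

end

theorem proposition8:
  fixes n r k i :: nat
    and f L :: "'a::{field,finite} \<Rightarrow> 'a"
    and g :: "'a \<Rightarrow> 'a"
    and \<gamma> a :: 'a
  assumes card: "card (UNIV :: 'a set) = 2 ^ n"
    and nrk: "n = r * k"
    and f_range: "\<forall>x. f x \<in> subfield_pow2 k"
    and L_lin: "Fq_linear k r L"
    and L_bij: "bij L"
    and g_perm: "bij_betw g (subfield_pow2 k) (subfield_pow2 k)"
    and i_lt: "i < k"
    and gamma_nz: "\<gamma> \<noteq> 0"
    and a_in: "a \<in> subfield_pow2 k" and a_nz: "a \<noteq> 0"
    and deriv: "\<forall>x. \<forall>u \<in> subfield_pow2 k. f (x + u * \<gamma>) + f x = u ^ (2 ^ i) * a"
  shows "bij (\<lambda>x. L x + L \<gamma> * (g (f x) + f x / a) ^ (2 ^ (n - i)))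
       \<and> inv (\<lambda>x. L x + L \<gamma> * (g (f x) + f x / a) ^ (2 ^ (n - i)))
         = (\<lambda>x. inv L x + \<gamma> * inverse (a ^ (2 ^ (n - i)))
              * (inv_into (subfield_pow2 k) g (f (inv L x) / a) + f (inv L x)) ^ (2 ^ (n - i)))"
proof -
  have char_2: "(2::'a) = 0"
    using char_2_if_card_UNIV_pow2[OF card] .
  have frobenius_id: "x ^ 2 ^ n = x" for x :: 'a
    using power_card_UNIV_field[of x] card by simp
  have "card {0::'a, 1} \<le> card (UNIV :: 'a set)"
    by (rule card_mono) auto
  then have "n \<noteq> 0"
    using card by (cases n) auto
  then have "i \<le> n"
    using nrk i_lt by (cases r) auto
  then interpret switching f g \<gamma> a n k i
    using char_2 f_range g_perm a_in a_nz deriv by unfold_locales (auto intro: frobenius_id)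
  have "(\<lambda>x. L x + L \<gamma> * (g (f x) + f x / a) ^ 2 ^ (n - i)) = L \<circ> switch_map"
  proof
    fix x
    show "L x + L \<gamma> * (g (f x) + f x / a) ^ 2 ^ (n - i) = (L \<circ> switch_map) x"
      using Fq_linear_add_scale[OF char_2 L_lin switch_coeff_in_subfield, of x x \<gamma>]
      by (simp add: switch_map_def switch_coeff_def ac_simps)
  qed
  then have "bij (\<lambda>x. L x + L \<gamma> * (g (f x) + f x / a) ^ 2 ^ (n - i))
      \<and> inv (\<lambda>x. L x + L \<gamma> * (g (f x) + f x / a) ^ 2 ^ (n - i)) = switch_inverse \<circ> inv L"
    using L_bij bij_switch_map inv_switch_map by (simp add: bij_comp o_inv_distrib)
  then show ?thesis
    by (simp add: comp_def switch_inverse_def)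
qed

end
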